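(* There is an absolute constant $C$ such that for all positive integers $n$, $$s(n)\le 2^{2n+C}\sum_{a,b,c\in[n]}2^{-|c-(a+b)|}\,g(c-(a+b)-1).$$
   Context: $[n]=\{1,\dots,n\}$, $[n]_0=\{0,1,\dots,n\}$. $s(n)$ is the number of sum-free subsets (no $a,b,c$, not necessarily distinct, with $a+b=c$, coordinatewise addition) of $\{1,3,4\}\times[n]\subset\mathbb{Z}^2$. The function $g:\mathbb{Z}\to\mathbb{R}$ is defined for positive integers $m$ by $$g(m)=\sum 2^{-|(S_1+S_2)\cap[m]_0|},$$ the sum over all pairs of sets $S_1,S_2\subseteq[m]_0$ with $0\in S_1$, $0\in S_2$ and $m+1\notin S_1+S_2$ (where $S_1+S_2=\{u+v:u\in S_1,v\in S_2\}$), and $g(m)=1$ for integers $m\le0$. *)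

theory Defs
  imports Complex_Main
begin

definition sumset :: "int set \<Rightarrow> int set \<Rightarrow> int set" where
  "sumset A B = {u + v | u v. u \<in> A \<and> v \<in> B}"

definition sum_free2 :: "(int \<times> int) set \<Rightarrow> bool" where
  "sum_free2 S \<longleftrightarrow> \<not> (\<exists>a\<in>S. \<exists>b\<in>S. \<exists>c\<in>S. (fst a + fst b, snd a + snd b) = c)"

definition s :: "nat \<Rightarrow> nat" where
  "s n = card {S. S \<subseteq> ({1, 3, 4} \<times> {1..int n}) \<and> sum_free2 S}"

definition g :: "int \<Rightarrow> real" where
  "g m = (if m \<le> 0 then 1 else
     (\<Sum>P \<in> {(S1, S2). S1 \<subseteq> {0..m} \<and> S2 \<subseteq> {0..m} \<and> 0 \<in> S1 \<and> 0 \<in> S2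
                        \<and> m + 1 \<notin> sumset S1 S2}.
        2 powr (- real (card (sumset (fst P) (snd P) \<inter> {0..m})))))"

end

theory Submission
  imports Defs
begin

text \<open>
  Among the first coordinates 1, 3, 4 the only relation x + y = z is 1 + 3 = 4, so a set in
  {1, 3, 4} \<times> [n] is sum-free iff its row 4 avoids A + B, where A and B are its rows 1 and 3.
  Hence s(n) is the sum over A, B \<subseteq> [n] of the weight 2^|[n] - (A + B)|; the pairs with an
  empty row contribute at most 2 * 4^n.
  Every other pair has a profile (a, b, c): a = min A, b = min B and c \<in> [n] maximal with
  c \<notin> A + B or c = a + b. Then (c, n] \<subseteq> A + B, so the weight is at most
  2^(c - |(A + B) \<inter> [a + b, c - 1]|). If c \<le> a + b, simply counting A \<subseteq> [a, n] and
  B \<subseteq> [b, n] bounds the total weight of the profile by 2^(2n + 2 - (a + b - c)).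
  If c > a + b, let m = c - (a + b) - 1: the parts of A and B in [a, a + m] and [b, b + m],
  translated to start at 0, form a pair in the sum defining g(m) whose summand is exactly
  2^-|(A + B) \<inter> [a + b, c - 1]|, while the parts above these windows are arbitrary subsets
  of [c - b, n] and [c - a, n]. This gives 2^(2n + 2 - (c - (a + b))) g(c - (a + b) - 1).
  Summing over all profiles, and absorbing the empty rows into the term a = b = c = 1 (which
  is 1/2), yields the theorem with C = 3.
\<close>

lemma sum_UN_le:
  fixes f :: "'a \<Rightarrow> real"
  assumes "finite K" "\<And>k. k \<in> K \<Longrightarrow> finite (X k)" "\<And>x. 0 \<le> f x"
  shows "sum f (\<Union>k\<in>K. X k) \<le> (\<Sum>k\<in>K. sum f (X k))"
proof -
  have "sum f (\<Union>k\<in>K. X k) \<le> (\<Sum>(k, x)\<in>(SIGMA k:K. X k). f x)"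
    by (rule sum_le_included[where i = snd]) (use assms in \<open>auto simp: finite_SigmaI\<close>)
  also have "\<dots> = (\<Sum>k\<in>K. sum f (X k))"
    by (rule sum.Sigma[symmetric]) (use assms in auto)
  finally show ?thesis .
qed

lemma sum_comp_le_card_mult_sum:
  fixes f :: "'b \<Rightarrow> real"
  assumes "inj_on (\<lambda>x. (u x, v x)) X" "u ` X \<subseteq> P" "v ` X \<subseteq> Q" "finite P" "finite Q"
    and "\<And>y. y \<in> P \<Longrightarrow> 0 \<le> f y"
  shows "(\<Sum>x\<in>X. f (u x)) \<le> card Q * sum f P"
proof -
  have "(\<Sum>x\<in>X. f (u x)) = (\<Sum>q\<in>(\<lambda>x. (u x, v x)) ` X. f (fst q))"
    by (simp add: sum.reindex[OF assms(1)])
  also have "\<dots> \<le> (\<Sum>q\<in>P \<times> Q. f (fst q))"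
    by (rule sum_mono2) (use assms in auto)
  also have "\<dots> = (\<Sum>(x, y)\<in>P \<times> Q. f x)"
    by (simp add: case_prod_unfold)
  also have "\<dots> = (\<Sum>x\<in>P. \<Sum>y\<in>Q. f x)"
    by (rule sum.cartesian_product[symmetric])
  also have "\<dots> = card Q * sum f P"
    by (simp add: sum_distrib_left)
  finally show ?thesis .
qed

lemma card_Pow_atLeastAtMost_int:
  "l \<le> u + 1 \<Longrightarrow> real (card (Pow {l..u :: int})) = 2 powr real_of_int (u - l + 1)"
  by (simp add: card_Pow powr_realpow[symmetric])

lemma two_powr_2n_plus_2_add: "(2::real) powr of_int (2 * int n + 2 + d) = 4 * 4 ^ n * 2 powr of_int d"
proof -
  have "(2::real) powr of_int (2 * int n + 2) = 2 powr real (2 * n + 2)"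
    by (simp add: add.commute)
  also have "\<dots> = 2 ^ (2 * n + 2)"
    by (rule powr_realpow) simp
  also have "\<dots> = 4 * 4 ^ n"
    by (simp add: power_add power_mult)
  finally have "(2::real) powr of_int (2 * int n + 2) = 4 * 4 ^ n" .
  then show ?thesis
    by (simp only: of_int_add powr_add)
qed

section \<open>Sum-free sets as pairs of rows\<close>

lemma mem_sumset: "x \<in> sumset A B \<longleftrightarrow> (\<exists>u\<in>A. \<exists>v\<in>B. x = u + v)"
  unfolding sumset_def by blast

lemma sum_free2_iff_rows:
  assumes "S \<subseteq> {1, 3, 4} \<times> UNIV"
  shows "sum_free2 S \<longleftrightarrow> (\<forall>x y. (1, x) \<in> S \<longrightarrow> (3, y) \<in> S \<longrightarrow> (4, x + y) \<notin> S)"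
proof -
  have rows: "fst u = 1 \<and> fst v = 3 \<or> fst u = 3 \<and> fst v = 1"
    if "u \<in> S" "v \<in> S" "w \<in> S" "fst u + fst v = fst w" for u v w
  proof -
    have "fst u \<in> {1, 3, 4}" "fst v \<in> {1, 3, 4}" "fst w \<in> {1, 3, 4}"
      using that(1-3) assms by auto
    then show ?thesis using that(4) by auto
  qed
  show ?thesis
  proof
    assume "sum_free2 S"
    then show "\<forall>x y. (1, x) \<in> S \<longrightarrow> (3, y) \<in> S \<longrightarrow> (4, x + y) \<notin> S"
      unfolding sum_free2_def by force
  next
    assume no_sum: "\<forall>x y. (1, x) \<in> S \<longrightarrow> (3, y) \<in> S \<longrightarrow> (4, x + y) \<notin> S"
    show "sum_free2 S"
      unfolding sum_free2_def
    proof (intro notI, elim bexE)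
      fix u v w assume uvw: "u \<in> S" "v \<in> S" "w \<in> S" "(fst u + fst v, snd u + snd v) = w"
      then consider "fst u = 1" "fst v = 3" | "fst u = 3" "fst v = 1" using rows by fastforce
      then show False
      proof cases
        case 1
        then show False using no_sum uvw by (cases u, cases v) auto
      next
        case 2
        then show False using no_sum uvw by (cases u, cases v) (auto, metis add.commute)
      qed
    qed
  qed
qed

definition weight :: "nat \<Rightarrow> int set \<times> int set \<Rightarrow> real" where
  "weight n p = 2 ^ card ({1..int n} - sumset (fst p) (snd p))"

lemma s_eq_card_Sigma:
  "s n = card (SIGMA p : Pow {1..int n} \<times> Pow {1..int n}. Pow ({1..int n} - sumset (fst p) (snd p)))"
proof -
  let ?I = "{1..int n}"
  let ?T = "SIGMA p : Pow ?I \<times> Pow ?I. Pow (?I - sumset (fst p) (snd p))"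
  let ?F = "{S. S \<subseteq> {1, 3, 4} \<times> ?I \<and> sum_free2 S}"
  let ?rows = "\<lambda>S :: (int \<times> int) set. (({x. (1, x) \<in> S}, {x. (3, x) \<in> S}), {x. (4, x) \<in> S})"
  let ?glue = "\<lambda>((A, B), C). {1} \<times> A \<union> {3} \<times> B \<union> {4 :: int} \<times> C"
  have "bij_betw ?glue ?T ?F"
  proof (rule bij_betw_byWitness[where f' = ?rows])
    show "?glue ` ?T \<subseteq> ?F"
    proof (rule image_subsetI)
      fix q assume "q \<in> ?T"
      then obtain A B C where q: "q = ((A, B), C)"
        and ABC: "A \<subseteq> ?I" "B \<subseteq> ?I" "C \<subseteq> ?I - sumset A B"
        by (metis (no_types, lifting) PowD SigmaE mem_Sigma_iff prod.collapse)
      then have sub: "?glue ((A, B), C) \<subseteq> {1, 3, 4} \<times> ?I" by auto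
      moreover have "sum_free2 (?glue ((A, B), C))"
        using sub ABC(3) by (subst sum_free2_iff_rows) (blast, force simp: mem_sumset)
      ultimately show "?glue q \<in> ?F" unfolding q by simp
    qed
    show "?rows ` ?F \<subseteq> ?T"
    proof (rule image_subsetI)
      fix S assume "S \<in> ?F"
      then have "S \<subseteq> {1, 3, 4} \<times> ?I" "\<forall>x y. (1, x) \<in> S \<longrightarrow> (3, y) \<in> S \<longrightarrow> (4, x + y) \<notin> S"
        using sum_free2_iff_rows[of S] by auto
      then show "?rows S \<in> ?T" by (auto simp: mem_sumset)
    qed
    show "\<forall>q \<in> ?T. ?rows (?glue q) = q"
      by force
    show "\<forall>S \<in> ?F. ?glue (?rows S) = S"
    proof
      fix S assume "S \<in> ?F"
      then have "S \<subseteq> {1, 3, 4} \<times> UNIV" by auto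
      then show "?glue (?rows S) = S" by auto
    qed
  qed
  then show ?thesis
    unfolding s_def by (simp add: bij_betw_same_card)
qed

lemma s_eq_sum_weight: "real (s n) = (\<Sum>p \<in> Pow {1..int n} \<times> Pow {1..int n}. weight n p)"
  unfolding s_eq_card_Sigma weight_def by (subst card_SigmaI) (auto simp: card_Pow)

lemma sum_weight_empty_le:
  "(\<Sum>p \<in> {p \<in> Pow {1..int n} \<times> Pow {1..int n}. fst p = {} \<or> snd p = {}}. weight n p) \<le> 2 * 4 ^ n"
proof -
  let ?E = "{p \<in> Pow {1..int n} \<times> Pow {1..int n}. fst p = {} \<or> snd p = {}}"
  have "card ?E \<le> card (({{}} \<times> Pow {1..int n}) \<union> (Pow {1..int n} \<times> {{}}))"
    by (rule card_mono) auto
  also have "\<dots> \<le> card ({{} :: int set} \<times> Pow {1..int n}) + card (Pow {1..int n} \<times> {{} :: int set})"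
    by (rule card_Un_le)
  also have "\<dots> = 2 * 2 ^ n"
    by (simp add: card_cartesian_product card_Pow)
  finally have "real (card ?E) \<le> real (2 * 2 ^ n)"
    by (rule of_nat_mono)
  then have card_E: "real (card ?E) \<le> 2 * 2 ^ n"
    by simp
  have "weight n p \<le> 2 ^ n" for p
  proof -
    have "card ({1..int n} - sumset (fst p) (snd p)) \<le> card {1..int n}"
      by (rule card_mono) auto
    then show ?thesis
      unfolding weight_def by (intro power_increasing) auto
  qed
  then have "sum (weight n) ?E \<le> real (card ?E) * 2 ^ n"
    by (rule sum_bounded_above)
  also have "\<dots> \<le> 2 * 2 ^ n * 2 ^ n"
    by (rule mult_right_mono[OF card_E]) simp
  also have "\<dots> = 2 * 4 ^ n"
    by (simp add: power_mult_distrib[symmetric])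
  finally show ?thesis .
qed

section \<open>Profiles\<close>

definition profile_class :: "nat \<Rightarrow> int \<Rightarrow> int \<Rightarrow> int \<Rightarrow> (int set \<times> int set) set" where
  "profile_class n a b c = {(A, B). A \<subseteq> {a..int n} \<and> a \<in> A \<and> B \<subseteq> {b..int n} \<and> b \<in> B
     \<and> (c \<notin> sumset A B \<or> c = a + b) \<and> {c<..int n} \<subseteq> sumset A B}"

lemma finite_profile_class: "finite (profile_class n a b c)"
  by (rule finite_subset[of _ "Pow {a..int n} \<times> Pow {b..int n}"]) (auto simp: profile_class_def)

lemma profile_class_cover:
  assumes "A \<subseteq> {1..int n}" "B \<subseteq> {1..int n}" "A \<noteq> {}" "B \<noteq> {}"
  shows "\<exists>a\<in>{1..int n}. \<exists>b\<in>{1..int n}. \<exists>c\<in>{1..int n}. (A, B) \<in> profile_class n a b c"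
proof -
  have fin: "finite A" "finite B"
    using assms(1,2) by (auto intro: finite_subset)
  define a where "a = Min A"
  define b where "b = Min B"
  define C where "C = {x \<in> {1..int n}. x \<notin> sumset A B \<or> x = a + b}"
  have a: "a \<in> A" "A \<subseteq> {a..int n}" and b: "b \<in> B" "B \<subseteq> {b..int n}"
    using fin assms unfolding a_def b_def by auto
  have "1 \<le> a" "a \<le> int n" "1 \<le> b" "b \<le> int n"
    using a(1) b(1) assms(1,2) by auto
  have "a + b \<le> x" if "x \<in> sumset A B" for x
    using that a b by (force simp: mem_sumset)
  \<comment> \<open>either a + b \<le> n lies in C, or no sum reaches n\<close>
  then have "min (a + b) (int n) \<in> C"
    using \<open>1 \<le> a\<close> \<open>a \<le> int n\<close> \<open>1 \<le> b\<close> unfolding C_def by (auto simp: min_def)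
  then have C: "finite C" "C \<noteq> {}"
    unfolding C_def by (blast intro: finite_subset[of _ "{1..int n}"])+
  define c where "c = Max C"
  have "c \<in> C"
    using C unfolding c_def by simp
  have tail: "{c<..int n} \<subseteq> sumset A B"
  proof
    fix x assume x: "x \<in> {c<..int n}"
    show "x \<in> sumset A B"
    proof (rule ccontr)
      assume "x \<notin> sumset A B"
      with x \<open>c \<in> C\<close> have "x \<in> C"
        unfolding C_def by auto
      with x show False
        using Max_ge[OF C(1)] unfolding c_def by fastforce
    qed
  qed
  have "(A, B) \<in> profile_class n a b c"
    using a b \<open>c \<in> C\<close> tail unfolding profile_class_def C_def by auto
  moreover have "a \<in> {1..int n}" "b \<in> {1..int n}" "c \<in> {1..int n}"
    using \<open>1 \<le> a\<close> \<open>a \<le> int n\<close> \<open>1 \<le> b\<close> \<open>b \<le> int n\<close> \<open>c \<in> C\<close> unfolding C_def by auto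
  ultimately show ?thesis
    by blast
qed

lemma card_nonsums_add_card_sums_le:
  assumes "{c<..int n} \<subseteq> sumset A B" "J \<subseteq> {1..c}"
  shows "card ({1..int n} - sumset A B) + card (sumset A B \<inter> J) \<le> nat c"
proof -
  have "x \<le> c" if "x \<in> {1..int n} - sumset A B" for x
    using that assms(1) by (meson DiffE atLeastAtMost_iff greaterThanAtMost_iff not_le subsetD)
  then have "{1..int n} - sumset A B \<subseteq> {1..c}"
    by auto
  with assms(2) have "({1..int n} - sumset A B) \<union> (sumset A B \<inter> J) \<subseteq> {1..c}"
    by blast
  then have "card (({1..int n} - sumset A B) \<union> (sumset A B \<inter> J)) \<le> nat c"
    using card_mono[of "{1..c}"] by fastforce
  moreover have "finite (sumset A B \<inter> J)"
    using assms(2) finite_subset by blast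
  ultimately show ?thesis
    by (subst card_Un_disjoint[symmetric]) auto
qed

lemma weight_le_profile:
  assumes "(A, B) \<in> profile_class n a b c" "1 \<le> a + b" "0 \<le> c"
  shows "weight n (A, B) \<le> 2 powr (real_of_int c - card (sumset A B \<inter> {a + b..c - 1}))"
proof -
  have "{c<..int n} \<subseteq> sumset A B"
    using assms(1) unfolding profile_class_def by simp
  moreover have "{a + b..c - 1} \<subseteq> {1..c}"
    using assms(2) by auto
  ultimately have "card ({1..int n} - sumset A B) + card (sumset A B \<inter> {a + b..c - 1}) \<le> nat c"
    by (rule card_nonsums_add_card_sums_le)
  then have "real (card ({1..int n} - sumset A B)) \<le> real_of_int c - card (sumset A B \<inter> {a + b..c - 1})"
    using assms(3) by linarith
  then show ?thesis
    unfolding weight_def by (simp add: powr_realpow[symmetric])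
qed

lemma sum_weight_profile_below:
  assumes "a \<in> {1..int n}" "b \<in> {1..int n}" "c \<in> {1..int n}" "c \<le> a + b"
  shows "sum (weight n) (profile_class n a b c) \<le> 4 * 4 ^ n * 2 powr of_int (c - (a + b))"
proof -
  let ?X = "profile_class n a b c"
  have card: "real (card ?X) \<le> 2 powr of_int (int n - a + 1) * 2 powr of_int (int n - b + 1)"
  proof -
    have "card ?X \<le> card (Pow {a..int n} \<times> Pow {b..int n})"
      by (rule card_mono) (auto simp: profile_class_def)
    then have "real (card ?X) \<le> real (card (Pow {a..int n})) * real (card (Pow {b..int n}))"
      by (simp add: card_cartesian_product flip: of_nat_mult)
    also have "\<dots> = 2 powr of_int (int n - a + 1) * 2 powr of_int (int n - b + 1)"
      using assms by (simp add: card_Pow_atLeastAtMost_int)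
    finally show ?thesis .
  qed
  have "weight n p \<le> 2 powr c" if "p \<in> ?X" for p
    using weight_le_profile[of "fst p" "snd p" n a b c] that assms by simp
  then have "sum (weight n) ?X \<le> card ?X * 2 powr c"
    by (rule sum_bounded_above)
  also have "\<dots> \<le> 2 powr of_int (int n - a + 1) * 2 powr of_int (int n - b + 1) * 2 powr c"
    by (rule mult_right_mono[OF card]) simp
  also have "\<dots> = 2 powr of_int (2 * int n + 2 + (c - (a + b)))"
  proof -
    have "of_int (int n - a + 1) + of_int (int n - b + 1) + of_int c
        = (of_int (2 * int n + 2 + (c - (a + b))) :: real)"
      by simp
    then show ?thesis
      by (simp only: powr_add[symmetric])
  qed
  also have "\<dots> = 4 * 4 ^ n * 2 powr of_int (c - (a + b))"
    by (rule two_powr_2n_plus_2_add)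
  finally show ?thesis .
qed

section \<open>Windows and the function g\<close>

definition g_pairs :: "int \<Rightarrow> (int set \<times> int set) set" where
  "g_pairs m = {(S1, S2). S1 \<subseteq> {0..m} \<and> S2 \<subseteq> {0..m} \<and> 0 \<in> S1 \<and> 0 \<in> S2 \<and> m + 1 \<notin> sumset S1 S2}"

definition g_weight :: "int \<Rightarrow> int set \<times> int set \<Rightarrow> real" where
  "g_weight m P = 2 powr (- real (card (sumset (fst P) (snd P) \<inter> {0..m})))"

lemma finite_g_pairs: "finite (g_pairs m)"
  by (rule finite_subset[of _ "Pow {0..m} \<times> Pow {0..m}"]) (auto simp: g_pairs_def)

lemma g_weight_le_one: "g_weight m P \<le> 1"
  unfolding g_weight_def by (simp add: powr_minus_divide ge_one_powr_ge_zero)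

lemma g_eq_sum_g_weight: "0 < m \<Longrightarrow> g m = sum (g_weight m) (g_pairs m)"
  unfolding g_def g_pairs_def g_weight_def by simp

lemma sum_g_weight_le_g:
  assumes "0 \<le> m"
  shows "sum (g_weight m) (g_pairs m) \<le> g m"
proof (cases "m = 0")
  case True
  \<comment> \<open>g 0 = 1 by the convention for m \<le> 0, while the sum is 1/2\<close>
  have "g_pairs 0 \<subseteq> {({0}, {0})}"
    by (auto simp: g_pairs_def)
  then have "sum (g_weight 0) (g_pairs 0) \<le> sum (g_weight 0) {({0}, {0})}"
    by (rule sum_mono2[rotated]) (auto simp: g_weight_def)
  also have "\<dots> \<le> g 0"
    by (simp add: g_weight_le_one g_def)
  finally show ?thesis
    using True by simp
next
  case False
  with assms show ?thesis
    by (simp add: g_eq_sum_g_weight)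
qed

definition window :: "int \<Rightarrow> int \<Rightarrow> int set \<Rightarrow> int set" where
  "window k m A = {x \<in> {0..m}. x + k \<in> A}"

lemma card_sumset_window:
  assumes "A \<subseteq> {a..}" "B \<subseteq> {b..}"
  shows "card (sumset (window a m A) (window b m B) \<inter> {0..m}) = card (sumset A B \<inter> {a + b..a + b + m})"
proof -
  have "sumset A B \<inter> {a + b..a + b + m}
      = (\<lambda>z. z + (a + b)) ` (sumset (window a m A) (window b m B) \<inter> {0..m})"
  proof safe
    fix z assume z: "z \<in> sumset A B" "z \<in> {a + b..a + b + m}"
    then obtain u v where "u \<in> A" "v \<in> B" "z = u + v"
      by (auto simp: mem_sumset)
    with assms z(2) have "u - a \<in> window a m A" "v - b \<in> window b m B"
      unfolding window_def by auto
    moreover have "z - (a + b) = (u - a) + (v - b)"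
      using \<open>z = u + v\<close> by simp
    ultimately have "z - (a + b) \<in> sumset (window a m A) (window b m B)"
      unfolding mem_sumset by blast
    with z(2) show "z \<in> (\<lambda>z. z + (a + b)) ` (sumset (window a m A) (window b m B) \<inter> {0..m})"
      by (intro image_eqI[of _ _ "z - (a + b)"]) auto
  qed (auto simp: mem_sumset window_def, metis add.assoc add.left_commute)
  then show ?thesis
    by (simp add: card_image)
qed

lemma sumset_window_succ:
  assumes "m + 1 \<in> sumset (window a m A) (window b m B)"
  shows "a + b + m + 1 \<in> sumset A B"
proof -
  from assms obtain u v where "u + a \<in> A" "v + b \<in> B" "m + 1 = u + v"
    unfolding window_def mem_sumset by auto
  moreover have "a + b + m + 1 = (u + a) + (v + b)"
    using \<open>m + 1 = u + v\<close> by simp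
  ultimately show ?thesis
    unfolding mem_sumset by blast
qed

lemma window_Un_tail:
  assumes "A \<subseteq> {a..}"
  shows "(\<lambda>x. x + a) ` window a m A \<union> (A \<inter> {a + m<..}) = A"
proof (intro equalityI subsetI)
  fix x assume "x \<in> A"
  with assms show "x \<in> (\<lambda>x. x + a) ` window a m A \<union> (A \<inter> {a + m<..})"
    unfolding window_def by (cases "x \<le> a + m") (auto intro!: image_eqI[of _ _ "x - a"])
qed (auto simp: window_def)

lemma inj_on_window_tail: "inj_on (\<lambda>A. (window a m A, A \<inter> {a + m<..})) {A. A \<subseteq> {a..}}"
proof (rule inj_onI)
  fix A A' assume "A \<in> {A. A \<subseteq> {a..}}" "A' \<in> {A. A \<subseteq> {a..}}"
    and "(window a m A, A \<inter> {a + m<..}) = (window a m A', A' \<inter> {a + m<..})"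
  then show "A = A'"
    using window_Un_tail[of A a m] window_Un_tail[of A' a m] by (metis mem_Collect_eq prod.inject)
qed

lemma windows_in_g_pairs:
  assumes "(A, B) \<in> profile_class n a b c" "a + b < c"
  shows "(window a (c - (a + b) - 1) A, window b (c - (a + b) - 1) B) \<in> g_pairs (c - (a + b) - 1)"
proof -
  have "c \<notin> sumset A B" "a \<in> A" "b \<in> B"
    using assms unfolding profile_class_def by auto
  moreover from this(1) have "c - (a + b) \<notin> sumset (window a (c - (a + b) - 1) A) (window b (c - (a + b) - 1) B)"
    using sumset_window_succ[of "c - (a + b) - 1" a A b B] by auto
  ultimately show ?thesis
    using assms(2) unfolding g_pairs_def window_def by auto
qed

lemma weight_le_g_weight_windows:
  assumes "(A, B) \<in> profile_class n a b c" "1 \<le> a" "1 \<le> b" "a + b < c"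
  shows "weight n (A, B)
    \<le> 2 powr c * g_weight (c - (a + b) - 1) (window a (c - (a + b) - 1) A, window b (c - (a + b) - 1) B)"
proof -
  have "A \<subseteq> {a..}" "B \<subseteq> {b..}"
    using assms(1) unfolding profile_class_def by auto
  from card_sumset_window[OF this, of "c - (a + b) - 1"]
  have "card (sumset A B \<inter> {a + b..c - 1})
      = card (sumset (window a (c - (a + b) - 1) A) (window b (c - (a + b) - 1) B) \<inter> {0..c - (a + b) - 1})"
    by simp
  then show ?thesis
    using weight_le_profile[OF assms(1)] assms(2-4)
    by (simp add: g_weight_def powr_diff powr_minus divide_inverse)
qed

lemma sum_weight_profile_above:
  assumes "a \<in> {1..int n}" "b \<in> {1..int n}" "c \<in> {1..int n}" "a + b < c"
  shows "sum (weight n) (profile_class n a b c)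
    \<le> 4 * 4 ^ n * (2 powr of_int (- (c - (a + b))) * g (c - (a + b) - 1))"
proof -
  define m where "m = c - (a + b) - 1"
  let ?X = "profile_class n a b c"
  let ?u = "\<lambda>p. (window a m (fst p), window b m (snd p))"
  let ?v = "\<lambda>p. (fst p \<inter> {a + m<..}, snd p \<inter> {b + m<..})"
  let ?Q = "Pow {c - b..int n} \<times> Pow {c - a..int n}"
  have bounds: "fst p \<subseteq> {a..int n}" "snd p \<subseteq> {b..int n}" if "p \<in> ?X" for p
    using that unfolding profile_class_def by auto
  have "inj_on (\<lambda>p. (?u p, ?v p)) ?X"
  proof (rule inj_onI)
    fix p q assume p: "p \<in> ?X" and q: "q \<in> ?X" and eq: "(?u p, ?v p) = (?u q, ?v q)"
    have "fst p = fst q"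
      by (rule inj_onD[OF inj_on_window_tail[of a m]]) (use eq bounds(1)[OF p] bounds(1)[OF q] in auto)
    moreover have "snd p = snd q"
      by (rule inj_onD[OF inj_on_window_tail[of b m]]) (use eq bounds(2)[OF p] bounds(2)[OF q] in auto)
    ultimately show "p = q"
      by (simp add: prod_eq_iff)
  qed
  moreover have "?u p \<in> g_pairs m" if "p \<in> ?X" for p
    using windows_in_g_pairs[of "fst p" "snd p" n a b c] that assms(4) unfolding m_def by simp
  then have "?u ` ?X \<subseteq> g_pairs m"
    by blast
  moreover have "?v p \<in> ?Q" if "p \<in> ?X" for p
    using bounds[OF that] unfolding m_def by auto
  then have "?v ` ?X \<subseteq> ?Q"
    by blast
  ultimately have "(\<Sum>p\<in>?X. g_weight m (?u p)) \<le> card ?Q * sum (g_weight m) (g_pairs m)"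
    by (intro sum_comp_le_card_mult_sum) (auto simp: finite_g_pairs g_weight_def)
  also have "\<dots> \<le> card ?Q * g m"
    using sum_g_weight_le_g[of m] assms(4) unfolding m_def by (simp add: mult_left_mono)
  finally have sum_u: "(\<Sum>p\<in>?X. g_weight m (?u p)) \<le> card ?Q * g m" .
  have card_Q: "real (card ?Q) = 2 powr of_int (int n - (c - b) + 1) * 2 powr of_int (int n - (c - a) + 1)"
    using assms by (simp add: card_cartesian_product card_Pow_atLeastAtMost_int)
  have "weight n p \<le> 2 powr c * g_weight m (?u p)" if "p \<in> ?X" for p
    using weight_le_g_weight_windows[of "fst p" "snd p" n a b c] that assms unfolding m_def by simp
  then have "sum (weight n) ?X \<le> (\<Sum>p\<in>?X. 2 powr c * g_weight m (?u p))"
    by (rule sum_mono)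
  also have "\<dots> = 2 powr c * (\<Sum>p\<in>?X. g_weight m (?u p))"
    by (simp add: sum_distrib_left)
  also have "\<dots> \<le> 2 powr c * (card ?Q * g m)"
    by (rule mult_left_mono[OF sum_u]) simp
  also have "\<dots> = 4 * 4 ^ n * (2 powr of_int (- (c - (a + b))) * g (c - (a + b) - 1))"
  proof -
    have "of_int c + (of_int (int n - (c - b) + 1) + of_int (int n - (c - a) + 1))
        = (of_int (2 * int n + 2 + - (c - (a + b))) :: real)"
      by simp
    then have "2 powr c * card ?Q = 4 * 4 ^ n * 2 powr of_int (- (c - (a + b)))"
      unfolding card_Q two_powr_2n_plus_2_add[symmetric] by (simp only: powr_add[symmetric])
    then show ?thesis
      unfolding m_def by (simp only: mult.assoc[symmetric])
  qed
  finally show ?thesis .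
qed

definition profile_kernel :: "int \<Rightarrow> real" where
  "profile_kernel d = 2 powr (- real_of_int \<bar>d\<bar>) * g (d - 1)"

lemma g_nonneg: "0 \<le> g m"
  by (cases "0 < m") (auto simp: g_eq_sum_g_weight g_weight_def g_def intro: sum_nonneg)

lemma profile_kernel_nonneg: "0 \<le> profile_kernel d"
  by (simp add: profile_kernel_def g_nonneg)

lemma sum_weight_profile_le:
  assumes "a \<in> {1..int n}" "b \<in> {1..int n}" "c \<in> {1..int n}"
  shows "sum (weight n) (profile_class n a b c) \<le> 4 * 4 ^ n * profile_kernel (c - (a + b))"
proof (cases "c \<le> a + b")
  case True
  then have "profile_kernel (c - (a + b)) = 2 powr of_int (c - (a + b))"
    by (simp add: profile_kernel_def g_def)
  then show ?thesis
    using sum_weight_profile_below[OF assms True] by simp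
next
  case False
  then have "profile_kernel (c - (a + b)) = 2 powr of_int (- (c - (a + b))) * g (c - (a + b) - 1)"
    by (simp add: profile_kernel_def)
  then show ?thesis
    using sum_weight_profile_above[OF assms] False by simp
qed

lemma sum_weight_nonempty_le:
  "(\<Sum>p \<in> {p \<in> Pow {1..int n} \<times> Pow {1..int n}. fst p \<noteq> {} \<and> snd p \<noteq> {}}. weight n p)
    \<le> 4 * 4 ^ n * (\<Sum>a\<in>{1..int n}. \<Sum>b\<in>{1..int n}. \<Sum>c\<in>{1..int n}. profile_kernel (c - (a + b)))"
proof -
  let ?I = "{1..int n}"
  have weight_nonneg: "0 \<le> weight n p" for p
    by (simp add: weight_def)
  have "{p \<in> Pow ?I \<times> Pow ?I. fst p \<noteq> {} \<and> snd p \<noteq> {}}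
      \<subseteq> (\<Union>a\<in>?I. \<Union>b\<in>?I. \<Union>c\<in>?I. profile_class n a b c)"
  proof
    fix p assume "p \<in> {p \<in> Pow ?I \<times> Pow ?I. fst p \<noteq> {} \<and> snd p \<noteq> {}}"
    then have "fst p \<subseteq> ?I" "snd p \<subseteq> ?I" "fst p \<noteq> {}" "snd p \<noteq> {}"
      by auto
    from profile_class_cover[OF this]
    show "p \<in> (\<Union>a\<in>?I. \<Union>b\<in>?I. \<Union>c\<in>?I. profile_class n a b c)"
      by auto
  qed
  then have "(\<Sum>p \<in> {p \<in> Pow ?I \<times> Pow ?I. fst p \<noteq> {} \<and> snd p \<noteq> {}}. weight n p)
      \<le> sum (weight n) (\<Union>a\<in>?I. \<Union>b\<in>?I. \<Union>c\<in>?I. profile_class n a b c)"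
    by (rule sum_mono2[rotated]) (auto simp: finite_profile_class weight_nonneg)
  also have "\<dots> \<le> (\<Sum>a\<in>?I. \<Sum>b\<in>?I. \<Sum>c\<in>?I. sum (weight n) (profile_class n a b c))"
    by (intro order_trans[OF sum_UN_le] sum_mono) (auto simp: finite_profile_class weight_nonneg)
  also have "\<dots> \<le> (\<Sum>a\<in>?I. \<Sum>b\<in>?I. \<Sum>c\<in>?I. 4 * 4 ^ n * profile_kernel (c - (a + b)))"
    by (intro sum_mono sum_weight_profile_le)
  also have "\<dots> = 4 * 4 ^ n * (\<Sum>a\<in>?I. \<Sum>b\<in>?I. \<Sum>c\<in>?I. profile_kernel (c - (a + b)))"
    by (simp add: sum_distrib_left)
  finally show ?thesis .
qed

lemma sum_profile_kernel_ge_half: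
  assumes "0 < n"
  shows "1 / 2 \<le> (\<Sum>a\<in>{1..int n}. \<Sum>b\<in>{1..int n}. \<Sum>c\<in>{1..int n}. profile_kernel (c - (a + b)))"
proof -
  let ?I = "{1..int n}"
  have one: "1 \<in> ?I"
    using assms by simp
  have "1 / 2 = profile_kernel (1 - (1 + 1))"
    by (simp add: profile_kernel_def g_def powr_minus_divide)
  also have "\<dots> \<le> (\<Sum>c\<in>?I. profile_kernel (c - (1 + 1)))"
    by (rule member_le_sum[OF one]) (simp_all add: profile_kernel_nonneg)
  also have "\<dots> \<le> (\<Sum>b\<in>?I. \<Sum>c\<in>?I. profile_kernel (c - (1 + b)))"
    by (rule member_le_sum[OF one, where f = "\<lambda>b. \<Sum>c\<in>?I. profile_kernel (c - (1 + b))"])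
      (simp_all add: sum_nonneg profile_kernel_nonneg)
  also have "\<dots> \<le> (\<Sum>a\<in>?I. \<Sum>b\<in>?I. \<Sum>c\<in>?I. profile_kernel (c - (a + b)))"
    by (rule member_le_sum[OF one, where f = "\<lambda>a. \<Sum>b\<in>?I. \<Sum>c\<in>?I. profile_kernel (c - (a + b))"])
      (simp_all add: sum_nonneg profile_kernel_nonneg)
  finally show ?thesis .
qed

lemma s_eq_sum_weight_empty_add_nonempty:
  "real (s n) = (\<Sum>p \<in> {p \<in> Pow {1..int n} \<times> Pow {1..int n}. fst p = {} \<or> snd p = {}}. weight n p)
    + (\<Sum>p \<in> {p \<in> Pow {1..int n} \<times> Pow {1..int n}. fst p \<noteq> {} \<and> snd p \<noteq> {}}. weight n p)"
proof -
  let ?PP = "Pow {1..int n} \<times> Pow {1..int n}"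
  have "sum (weight n) ?PP
      = sum (weight n) ({p \<in> ?PP. fst p = {} \<or> snd p = {}} \<union> {p \<in> ?PP. fst p \<noteq> {} \<and> snd p \<noteq> {}})"
    by (rule arg_cong[where f = "sum (weight n)"]) blast
  also have "\<dots> = (\<Sum>p \<in> {p \<in> ?PP. fst p = {} \<or> snd p = {}}. weight n p)
      + (\<Sum>p \<in> {p \<in> ?PP. fst p \<noteq> {} \<and> snd p \<noteq> {}}. weight n p)"
    by (rule sum.union_disjoint) auto
  finally show ?thesis
    unfolding s_eq_sum_weight .
qed

theorem mainTheorem10:
  shows "\<exists>C::real. \<forall>n::nat. n > 0 \<longrightarrow>
    real (s n) \<le> 2 powr (2 * real n + C) *
      (\<Sum>a\<in>{1..int n}. \<Sum>b\<in>{1..int n}. \<Sum>c\<in>{1..int n}.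
         2 powr (- real_of_int \<bar>c - (a + b)\<bar>) * g (c - (a + b) - 1))"
proof (intro exI[of _ 3] allI impI)
  fix n :: nat assume "0 < n"
  let ?K = "\<Sum>a\<in>{1..int n}. \<Sum>b\<in>{1..int n}. \<Sum>c\<in>{1..int n}. profile_kernel (c - (a + b))"
  have "real (s n) \<le> 2 * 4 ^ n + 4 * 4 ^ n * ?K"
    unfolding s_eq_sum_weight_empty_add_nonempty
    using sum_weight_empty_le sum_weight_nonempty_le by (rule add_mono)
  also have "\<dots> \<le> 8 * 4 ^ n * ?K"
    using sum_profile_kernel_ge_half[OF \<open>0 < n\<close>] by simp
  also have "8 * 4 ^ n = (2::real) powr (2 * real n + 3)"
    using two_powr_2n_plus_2_add[of n 1] by (simp add: add.commute)
  finally show "real (s n) \<le> 2 powr (2 * real n + 3) *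
      (\<Sum>a\<in>{1..int n}. \<Sum>b\<in>{1..int n}. \<Sum>c\<in>{1..int n}.
         2 powr (- real_of_int \<bar>c - (a + b)\<bar>) * g (c - (a + b) - 1))"
    unfolding profile_kernel_def .
qed

end
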